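(* Let $P$ be an Eulerian poset of rank $d$. Then $$\sum_{\hat0\le x\le\hat1}B([\hat0,x];u^{-1},v^{-1})(uv)^{\rho(x)}(v-u)^{d-\rho(x)}=\sum_{\hat0\le x\le\hat1}B([x,\hat1];u,v)(uv-1)^{\rho(x)}.$$
   Context: An Eulerian poset is a finite poset with least element $\hat0$, greatest element $\hat1$, all maximal chains of the same length $d$ (the rank), rank function $\rho$, and Möbius function $\mu(x,y)=(-1)^{\rho(y)-\rho(x)}$ for $x\le y$; intervals $[x,y]$ are Eulerian of rank $\rho(y)-\rho(x)$. For Eulerian $Q$ of rank $e$: $G(Q,t)=H(Q,t)=1$ if $e=0$; for $e>0$, $H(Q,t)=\sum_{\hat0<x\le\hat1}(t-1)^{\rho(x)-1}G([x,\hat1],t)$, $G(Q,t)=\tau_{<e/2}((1-t)H(Q,t))$ with $\tau_{<r}(\sum a_it^i)=\sum_{i<r}a_it^i$. $B(Q;u,v)\in\mathbb{Z}[u,v]$ is defined by $B=1$ if $e=0$ and for $e>0$ recursively by $\sum_{\hat0\le x\le\hat1}B([\hat0,x];u,v)u^{e-\rho(x)}G([x,\hat1],u^{-1}v)=G(Q,uv)$. *)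

theory Defs
  imports "HOL-Computational_Algebra.Polynomial"
begin

text \<open>A finite poset is given by a carrier set S and a relation le (only its
restriction to S matters).  All posets below are intervals of a fixed poset.\<close>

definition itv :: "'a set \<Rightarrow> ('a \<Rightarrow> 'a \<Rightarrow> bool) \<Rightarrow> 'a \<Rightarrow> 'a \<Rightarrow> 'a set" where
  "itv S le x y = {z \<in> S. le x z \<and> le z y}"

definition is_chain :: "'a set \<Rightarrow> ('a \<Rightarrow> 'a \<Rightarrow> bool) \<Rightarrow> 'a set \<Rightarrow> bool" where
  "is_chain S le C \<longleftrightarrow> C \<subseteq> S \<and> (\<forall>a\<in>C. \<forall>b\<in>C. le a b \<or> le b a)"

definition max_chain :: "'a set \<Rightarrow> ('a \<Rightarrow> 'a \<Rightarrow> bool) \<Rightarrow> 'a set \<Rightarrow> bool" where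
  "max_chain S le C \<longleftrightarrow> is_chain S le C \<and> (\<forall>D. is_chain S le D \<and> C \<subseteq> D \<longrightarrow> D = C)"

text \<open>Rank of a finite poset: length (= cardinality minus one) of its maximal chains
(all of the same length in the graded case; we take the maximum).\<close>
definition prank :: "'a set \<Rightarrow> ('a \<Rightarrow> 'a \<Rightarrow> bool) \<Rightarrow> nat" where
  "prank S le = Max {card C | C. max_chain S le C} - 1"

definition rk :: "'a set \<Rightarrow> ('a \<Rightarrow> 'a \<Rightarrow> bool) \<Rightarrow> 'a \<Rightarrow> 'a \<Rightarrow> nat" where
  "rk S le x y = prank (itv S le x y) le"

text \<open>Moebius function of the poset, via the usual recursion
  mu(x,x) = 1, mu(x,y) = - sum over x<=z<y of mu(x,z); the fuel argument is
  instantiated with card S, which exceeds the recursion depth.\<close>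
fun mobf :: "nat \<Rightarrow> 'a set \<Rightarrow> ('a \<Rightarrow> 'a \<Rightarrow> bool) \<Rightarrow> 'a \<Rightarrow> 'a \<Rightarrow> int" where
  "mobf 0 S le x y = 0"
| "mobf (Suc n) S le x y =
     (if x = y then 1 else - (\<Sum>z\<in>itv S le x y - {y}. mobf n S le x z))"

definition mobius :: "'a set \<Rightarrow> ('a \<Rightarrow> 'a \<Rightarrow> bool) \<Rightarrow> 'a \<Rightarrow> 'a \<Rightarrow> int" where
  "mobius S le x y = mobf (card S) S le x y"

definition eulerian :: "'a set \<Rightarrow> ('a \<Rightarrow> 'a \<Rightarrow> bool) \<Rightarrow> 'a \<Rightarrow> 'a \<Rightarrow> nat \<Rightarrow> bool" where
  "eulerian S le zero one d \<longleftrightarrow>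
     finite S \<and>
     (\<forall>x\<in>S. le x x) \<and>
     (\<forall>x\<in>S. \<forall>y\<in>S. le x y \<and> le y x \<longrightarrow> x = y) \<and>
     (\<forall>x\<in>S. \<forall>y\<in>S. \<forall>z\<in>S. le x y \<and> le y z \<longrightarrow> le x z) \<and>
     zero \<in> S \<and> one \<in> S \<and> (\<forall>x\<in>S. le zero x \<and> le x one) \<and>
     (\<forall>C. max_chain S le C \<longrightarrow> card C = d + 1) \<and>
     (\<forall>x\<in>S. \<forall>y\<in>S. le x y \<longrightarrow>
        mobius S le x y = (-1) ^ (rk S le zero y - rk S le zero x))"

definition tau_half :: "nat \<Rightarrow> int poly \<Rightarrow> int poly" where
  "tau_half e p = (\<Sum>i\<in>{i. 2 * i < e}. monom (coeff p i) i)"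

text \<open>G polynomial of the interval [x,y] (fuel argument, instantiated with card S).
  Inside the sum, (t-1)^(rho(z)-1) * G([z,y],t) over x < z <= y, i.e. the H polynomial.\<close>
fun Gf :: "nat \<Rightarrow> 'a set \<Rightarrow> ('a \<Rightarrow> 'a \<Rightarrow> bool) \<Rightarrow> 'a \<Rightarrow> 'a \<Rightarrow> int poly" where
  "Gf 0 S le x y = 1"
| "Gf (Suc n) S le x y =
     (if rk S le x y = 0 then 1
      else tau_half (rk S le x y)
             ([:1, -1:] * (\<Sum>z\<in>itv S le x y - {x}. [:-1, 1:] ^ (rk S le x z - 1) * Gf n S le z y)))"

definition Gpoly :: "'a set \<Rightarrow> ('a \<Rightarrow> 'a \<Rightarrow> bool) \<Rightarrow> 'a \<Rightarrow> 'a \<Rightarrow> int poly" where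
  "Gpoly S le x y = Gf (card S) S le x y"

definition Hpoly :: "'a set \<Rightarrow> ('a \<Rightarrow> 'a \<Rightarrow> bool) \<Rightarrow> 'a \<Rightarrow> 'a \<Rightarrow> int poly" where
  "Hpoly S le x y = (if rk S le x y = 0 then 1 else
     (\<Sum>z\<in>itv S le x y - {x}. [:-1, 1:] ^ (rk S le x z - 1) * Gpoly S le z y))"

text \<open>Bivariate integer polynomials Z[u,v] are represented as int poly poly:
  polynomials in v whose coefficients are polynomials in u.\<close>
definition varU :: "int poly poly" where "varU = [:[:0, 1:]:]"
definition varV :: "int poly poly" where "varV = [:0, 1:]"

definition subst_uv :: "int poly \<Rightarrow> int poly poly" where
  "subst_uv g = (\<Sum>i\<le>degree g. [:[:coeff g i:]:] * (varU * varV) ^ i)"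

text \<open>u^m g(u^{-1} v) for g in Z[t] of degree at most m.\<close>
definition hom_uv :: "nat \<Rightarrow> int poly \<Rightarrow> int poly poly" where
  "hom_uv m g = (\<Sum>i\<le>degree g. [:[:coeff g i:]:] * varU ^ (m - i) * varV ^ i)"

text \<open>B polynomial of [x,y]: the defining recursion
  sum_{x<=z<=y} B([x,z]) u^{rho(y)-rho(z)} G([z,y],u^{-1}v) = G([x,y],uv),
  solved for the term z = y (for which u^0 G(point) = 1).\<close>
fun Bf :: "nat \<Rightarrow> 'a set \<Rightarrow> ('a \<Rightarrow> 'a \<Rightarrow> bool) \<Rightarrow> 'a \<Rightarrow> 'a \<Rightarrow> int poly poly" where
  "Bf 0 S le x y = 1"
| "Bf (Suc n) S le x y =
     (if rk S le x y = 0 then 1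
      else subst_uv (Gpoly S le x y)
           - (\<Sum>z\<in>itv S le x y - {y}. Bf n S le x z * hom_uv (rk S le z y) (Gpoly S le z y)))"

definition Bpoly :: "'a set \<Rightarrow> ('a \<Rightarrow> 'a \<Rightarrow> bool) \<Rightarrow> 'a \<Rightarrow> 'a \<Rightarrow> int poly poly" where
  "Bpoly S le x y = Bf (card S) S le x y"

definition eval_uv :: "int poly poly \<Rightarrow> real \<Rightarrow> real \<Rightarrow> real" where
  "eval_uv p u v = poly (map_poly (\<lambda>c. poly (map_poly of_int c) u) p) v"

end

theory Submission
  imports Defs
begin

(* Work in the incidence algebra of P, where f \<star> g is convolution over intervals and c^\<rho> is the
   function (x, y) \<mapsto> c^\<rho>(x,y). The defining recursion of B reads B(u,v) \<star> u^\<rho> G(v/u) = G(uv),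
   and on an Eulerian poset the Kazhdan-Lusztig-Stanley reciprocity reads
   (t - 1)^\<rho> \<star> G(t) = t^\<rho> G(1/t). Combining them, L = (uv)^\<rho> B(1/u,1/v) \<star> (v - u)^\<rho> and
   R = (uv - 1)^\<rho> \<star> B(u,v) agree after convolution with the unitriangular \<Gamma> = u^\<rho> G(v/u),
   hence L = R; the two sides of the theorem are the entries of L and R at (0,1). *)

section \<open>Evaluating integer and bivariate polynomials\<close>

lemma map_poly_add:
  assumes "f 0 = 0" and "\<And>a b. f (a + b) = f a + f b"
  shows "map_poly f (p + q) = map_poly f p + map_poly f q"
  by (rule poly_eqI) (simp add: coeff_map_poly assms)

lemma map_poly_uminus:
  fixes f :: "'a::ab_group_add \<Rightarrow> 'b::ab_group_add"
  assumes "f 0 = 0" and "\<And>a b. f (a + b) = f a + f b"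
  shows "map_poly f (- p) = - map_poly f p"
proof -
  have "f (- a) = - f a" for a
    using assms(2)[of "- a" a] assms(1) by (simp add: eq_neg_iff_add_eq_0)
  then show ?thesis
    by (intro poly_eqI) (simp add: coeff_map_poly assms(1))
qed

lemma map_poly_mult:
  fixes f :: "'a::comm_semiring_0 \<Rightarrow> 'b::comm_semiring_0"
  assumes f0: "f 0 = 0" and f_add: "\<And>a b. f (a + b) = f a + f b"
    and f_mult: "\<And>a b. f (a * b) = f a * f b"
  shows "map_poly f (p * q) = map_poly f p * map_poly f q"
  by (induction p)
    (simp_all add: map_poly_add[OF f0 f_add] map_poly_smult[OF f0 f_mult] map_poly_pCons[of f, OF f0] f0)

definition ipoly :: "int poly \<Rightarrow> real \<Rightarrow> real" where
  "ipoly p = poly (map_poly of_int p)"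

lemma ipoly_0 [simp]: "ipoly 0 t = 0"
  and ipoly_1 [simp]: "ipoly 1 t = 1"
  and ipoly_pCons [simp]: "ipoly (pCons a p) t = of_int a + t * ipoly p t"
  and ipoly_monom [simp]: "ipoly (monom a n) t = of_int a * t ^ n"
  and ipoly_add [simp]: "ipoly (p + q) t = ipoly p t + ipoly q t"
  and ipoly_uminus [simp]: "ipoly (- p) t = - ipoly p t"
  and ipoly_mult [simp]: "ipoly (p * q) t = ipoly p t * ipoly q t"
  by (simp_all add: ipoly_def map_poly_pCons map_poly_monom poly_monom
      map_poly_add map_poly_uminus map_poly_mult)

lemma ipoly_diff [simp]: "ipoly (p - q) t = ipoly p t - ipoly q t"
  using ipoly_add[of p "- q"] by simp

lemma ipoly_power [simp]: "ipoly (p ^ n) t = ipoly p t ^ n"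
  by (induction n) simp_all

lemma ipoly_sum [simp]: "ipoly (\<Sum>i\<in>A. p i) t = (\<Sum>i\<in>A. ipoly (p i) t)"
  by (induction A rule: infinite_finite_induct) simp_all

lemma ipoly_altdef:
  assumes "degree p \<le> n"
  shows "ipoly p t = (\<Sum>i\<le>n. of_int (coeff p i) * t ^ i)"
  by (subst poly_as_sum_of_monoms'[OF assms, symmetric]) simp

lemma ipoly_eqI:
  assumes "\<And>t. t \<noteq> 0 \<Longrightarrow> ipoly p t = ipoly q t"
  shows "p = q"
proof -
  have "poly (map_poly of_int (p - q) * [:0, 1:]) t = 0" for t :: real
    using assms[of t] by (cases "t = 0") (simp_all add: ipoly_def[symmetric])
  then have "map_poly (of_int :: int \<Rightarrow> real) (p - q) = 0"
    using poly_all_0_iff_0 by (metis mult_eq_0_iff pCons_eq_0_iff zero_neq_one)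
  then show ?thesis
    by (simp add: map_poly_eq_0_iff)
qed

lemma eval_uv_ipoly: "eval_uv P u v = poly (map_poly (\<lambda>c. ipoly c u) P) v"
  by (simp add: eval_uv_def ipoly_def)

lemma eval_uv_0 [simp]: "eval_uv 0 u v = 0"
  and eval_uv_pCons [simp]: "eval_uv (pCons c P) u v = ipoly c u + v * eval_uv P u v"
  and eval_uv_smult [simp]: "eval_uv (smult c P) u v = ipoly c u * eval_uv P u v"
  and eval_uv_add [simp]: "eval_uv (P + Q) u v = eval_uv P u v + eval_uv Q u v"
  and eval_uv_uminus [simp]: "eval_uv (- P) u v = - eval_uv P u v"
  and eval_uv_mult [simp]: "eval_uv (P * Q) u v = eval_uv P u v * eval_uv Q u v"
  by (simp_all add: eval_uv_ipoly map_poly_pCons map_poly_smult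
      map_poly_add map_poly_uminus map_poly_mult)

lemma eval_uv_1 [simp]: "eval_uv 1 u v = 1"
  and eval_uv_varU [simp]: "eval_uv varU u v = u"
  and eval_uv_varV [simp]: "eval_uv varV u v = v"
  by (simp_all add: varU_def varV_def one_pCons)

lemma eval_uv_diff [simp]: "eval_uv (P - Q) u v = eval_uv P u v - eval_uv Q u v"
  using eval_uv_add[of P "- Q"] by simp

lemma eval_uv_power [simp]: "eval_uv (P ^ n) u v = eval_uv P u v ^ n"
  by (induction n) simp_all

lemma eval_uv_sum [simp]: "eval_uv (\<Sum>i\<in>A. P i) u v = (\<Sum>i\<in>A. eval_uv (P i) u v)"
  by (induction A rule: infinite_finite_induct) simp_all

lemma eval_uv_subst_uv: "eval_uv (subst_uv g) u v = ipoly g (u * v)"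
  by (simp add: subst_uv_def ipoly_altdef[of g "degree g"])

lemma eval_uv_hom_uv:
  assumes "degree g \<le> m" and "u \<noteq> 0"
  shows "eval_uv (hom_uv m g) u v = u ^ m * ipoly g (v / u)"
proof -
  have "u ^ (m - i) * v ^ i = u ^ m * (v / u) ^ i" if "i \<le> m" for i
    using that assms(2) by (simp add: power_divide power_diff)
  then show ?thesis
    using assms(1) by (simp add: hom_uv_def ipoly_altdef[of g "degree g"] sum_distrib_left mult_ac)
qed

lemma coeff_tau_half: "coeff (tau_half e p) j = (if 2 * j < e then coeff p j else 0)"
proof -
  have "finite {i::nat. 2 * i < e}"
    by (rule finite_subset[of _ "{..<e}"]) auto
  then show ?thesis
    by (simp add: tau_half_def coeff_sum coeff_monom sum.delta)
qed

lemma degree_tau_half: "degree (tau_half e p) \<le> e"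
  by (rule degree_le) (simp add: coeff_tau_half)

definition mirror_poly :: "nat \<Rightarrow> 'a::comm_monoid_add poly \<Rightarrow> 'a poly" where
  "mirror_poly e p = (\<Sum>i\<le>e. monom (coeff p i) (e - i))"

lemma coeff_mirror_poly: "coeff (mirror_poly e p) j = (if j \<le> e then coeff p (e - j) else 0)"
proof (cases "j \<le> e")
  case True
  then have "(\<Sum>i\<le>e. if e - i = j then coeff p i else 0) = (\<Sum>i\<le>e. if i = e - j then coeff p i else 0)"
    by (intro sum.cong) auto
  with True show ?thesis
    by (simp add: mirror_poly_def coeff_sum coeff_monom)
next
  case False
  then show ?thesis
    by (auto simp: mirror_poly_def coeff_sum coeff_monom intro!: sum.neutral)
qed

lemma ipoly_mirror_poly:
  assumes "degree p \<le> e" and "t \<noteq> 0"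
  shows "ipoly (mirror_poly e p) t = t ^ e * ipoly p (1 / t)"
  using assms by (simp add: mirror_poly_def ipoly_altdef sum_distrib_left power_diff power_one_over mult.commute)

lemma mirror_poly_tau_half:
  assumes "degree q \<le> e" and "mirror_poly e q = - q"
  shows "mirror_poly e (tau_half e q) = tau_half e q - q"
proof (rule poly_eqI)
  fix j
  have antisym: "coeff q (e - j) = - coeff q j" if "j \<le> e"
    using arg_cong[OF assms(2), of "\<lambda>p. coeff p j"] that by (simp add: coeff_mirror_poly)
  show "coeff (mirror_poly e (tau_half e q)) j = coeff (tau_half e q - q) j"
  proof (cases "j \<le> e")
    case True
    then show ?thesis
      using antisym[OF True] by (cases "2 * j = e") (auto simp: coeff_mirror_poly coeff_tau_half)
  next
    case False
    then show ?thesis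
      using assms(1) by (simp add: coeff_mirror_poly coeff_tau_half coeff_eq_0)
  qed
qed

section \<open>Finite posets and their incidence algebra\<close>

locale finite_poset =
  fixes S :: "'a set" and le :: "'a \<Rightarrow> 'a \<Rightarrow> bool" (infix "\<preceq>" 50)
  assumes finite_carrier: "finite S"
    and poset_refl: "x \<in> S \<Longrightarrow> x \<preceq> x"
    and poset_antisym: "x \<in> S \<Longrightarrow> y \<in> S \<Longrightarrow> x \<preceq> y \<Longrightarrow> y \<preceq> x \<Longrightarrow> x = y"
    and poset_trans: "x \<in> S \<Longrightarrow> y \<in> S \<Longrightarrow> z \<in> S \<Longrightarrow> x \<preceq> y \<Longrightarrow> y \<preceq> z \<Longrightarrow> x \<preceq> z"
begin

abbreviation I :: "'a \<Rightarrow> 'a \<Rightarrow> 'a set" where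
  "I x y \<equiv> itv S (\<preceq>) x y"

abbreviation \<rho> :: "'a \<Rightarrow> 'a \<Rightarrow> nat" where
  "\<rho> x y \<equiv> rk S (\<preceq>) x y"

lemma mem_itv [simp]: "z \<in> I x y \<longleftrightarrow> z \<in> S \<and> x \<preceq> z \<and> z \<preceq> y"
  by (simp add: itv_def)

lemma finite_itv [simp]: "finite (I x y)"
  by (rule finite_subset[OF _ finite_carrier]) auto

lemma itv_refl: "x \<in> S \<Longrightarrow> I x x = {x}"
  using poset_refl poset_antisym by auto

lemma left_mem_itv: "x \<in> S \<Longrightarrow> x \<preceq> y \<Longrightarrow> x \<in> I x y"
  and right_mem_itv: "y \<in> S \<Longrightarrow> x \<preceq> y \<Longrightarrow> y \<in> I x y"
  by (simp_all add: poset_refl)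

lemma card_itv_pos: "x \<in> S \<Longrightarrow> x \<preceq> y \<Longrightarrow> 0 < card (I x y)"
  using left_mem_itv card_gt_0_iff by fastforce

lemma card_itv_le: "card (I x y) \<le> card S"
  by (rule card_mono[OF finite_carrier]) auto

lemma card_itv_less_left:
  assumes "x \<in> S" and "y \<in> S" and z: "z \<in> I x y - {y}"
  shows "card (I x z) < card (I x y)"
proof (rule psubset_card_mono[OF finite_itv])
  from z have "z \<in> S" "x \<preceq> z" "z \<preceq> y" "z \<noteq> y" by auto
  then have "I x z \<subseteq> I x y" and "y \<notin> I x z" and "y \<in> I x y"
    using assms(1,2) poset_trans[of _ z y] poset_trans[of x z y] poset_antisym[of y z] poset_refl[of y]
    by auto
  then show "I x z \<subset> I x y" by blast
qed

lemma card_itv_less_right: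
  assumes "x \<in> S" and "y \<in> S" and z: "z \<in> I x y - {x}"
  shows "card (I z y) < card (I x y)"
proof (rule psubset_card_mono[OF finite_itv])
  from z have "z \<in> S" "x \<preceq> z" "z \<preceq> y" "z \<noteq> x" by auto
  then have "I z y \<subseteq> I x y" and "x \<notin> I z y" and "x \<in> I x y"
    using assms(1,2) poset_trans[of x z] poset_trans[of x z y] poset_antisym[of x z] poset_refl[of x]
    by auto
  then show "I z y \<subset> I x y" by blast
qed

text \<open>Each step of the fuelled recursions \<open>mobf\<close>, \<open>Gf\<close> and \<open>Bf\<close> only consults strictly smaller
  intervals, so the fuel \<open>card S\<close> suffices and the fuelled function satisfies its own recursion.\<close>

lemma fuel_unfold:
  fixes F :: "nat \<Rightarrow> 'a \<Rightarrow> 'a \<Rightarrow> 'b"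
  assumes step: "\<And>n x y. F (Suc n) x y = \<Phi> (F n) x y"
    and step_cong: "\<And>h h' x y. x \<in> S \<Longrightarrow> y \<in> S \<Longrightarrow> x \<preceq> y \<Longrightarrow>
      (\<And>a b. a \<in> S \<Longrightarrow> b \<in> S \<Longrightarrow> a \<preceq> b \<Longrightarrow> card (I a b) < card (I x y) \<Longrightarrow> h a b = h' a b) \<Longrightarrow>
      \<Phi> h x y = \<Phi> h' x y"
    and "x \<in> S" and "y \<in> S" and "x \<preceq> y"
  shows "F (card S) x y = \<Phi> (F (card S)) x y"
proof -
  have fuel_indep: "F n a b = F m a b"
    if "a \<in> S" "b \<in> S" "a \<preceq> b" "card (I a b) \<le> n" "card (I a b) \<le> m" for n m a b
    using that
  proof (induction n arbitrary: m a b)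
    case 0
    then show ?case using card_itv_pos by fastforce
  next
    case (Suc n)
    then obtain m' where m: "m = Suc m'"
      using card_itv_pos by (cases m) fastforce+
    have "\<Phi> (F n) a b = \<Phi> (F m') a b"
    proof (rule step_cong[OF Suc.prems(1-3)])
      fix a' b' assume "a' \<in> S" "b' \<in> S" "a' \<preceq> b'" "card (I a' b') < card (I a b)"
      then show "F n a' b' = F m' a' b'"
        using Suc.prems(4,5) m by (intro Suc.IH) auto
    qed
    then show ?case
      by (simp add: m step)
  qed
  obtain k where k: "card S = Suc k"
    using card_itv_pos[OF assms(3,5)] card_itv_le[of x y] by (cases "card S") auto
  have "F (card S) x y = \<Phi> (F k) x y"
    by (simp add: k step)
  also have "\<dots> = \<Phi> (F (card S)) x y"
  proof (rule step_cong[OF assms(3-5)])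
    fix a b assume "a \<in> S" "b \<in> S" "a \<preceq> b" "card (I a b) < card (I x y)"
    then show "F k a b = F (card S) a b"
      using card_itv_le[of x y] k by (intro fuel_indep) auto
  qed
  finally show ?thesis .
qed

lemma mobius_unfold:
  assumes "x \<in> S" and "y \<in> S" and "x \<preceq> y" and "x \<noteq> y"
  shows "mobius S (\<preceq>) x y = - (\<Sum>z\<in>I x y - {y}. mobius S (\<preceq>) x z)"
proof -
  have "mobius S (\<preceq>) x y = (if x = y then 1 else - (\<Sum>z\<in>I x y - {y}. mobius S (\<preceq>) x z))"
    unfolding mobius_def
    by (rule fuel_unfold[where F = "\<lambda>n. mobf n S (\<preceq>)"
        and \<Phi> = "\<lambda>h x y. if x = y then 1 else - (\<Sum>z\<in>I x y - {y}. h x z)"])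
      (use assms card_itv_less_left in \<open>auto intro!: sum.cong\<close>)
  with assms(4) show ?thesis by simp
qed

lemma Gpoly_unfold:
  assumes "x \<in> S" and "y \<in> S" and "x \<preceq> y"
  shows "Gpoly S (\<preceq>) x y =
    (if \<rho> x y = 0 then 1 else tau_half (\<rho> x y) ([:1, -1:] * Hpoly S (\<preceq>) x y))"
proof -
  have "Gpoly S (\<preceq>) x y = (if \<rho> x y = 0 then 1 else tau_half (\<rho> x y)
      ([:1, -1:] * (\<Sum>z\<in>I x y - {x}. [:-1, 1:] ^ (\<rho> x z - 1) * Gpoly S (\<preceq>) z y)))"
    unfolding Gpoly_def
    by (rule fuel_unfold[where F = "\<lambda>n. Gf n S (\<preceq>)" and \<Phi> = "\<lambda>h x y. if \<rho> x y = 0 then 1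
        else tau_half (\<rho> x y) ([:1, -1:] * (\<Sum>z\<in>I x y - {x}. [:-1, 1:] ^ (\<rho> x z - 1) * h z y))"])
      (use assms card_itv_less_right in \<open>auto intro!: sum.cong\<close>)
  then show ?thesis
    by (simp add: Hpoly_def)
qed

lemma Bpoly_unfold:
  assumes "x \<in> S" and "y \<in> S" and "x \<preceq> y"
  shows "Bpoly S (\<preceq>) x y = (if \<rho> x y = 0 then 1 else subst_uv (Gpoly S (\<preceq>) x y)
    - (\<Sum>z\<in>I x y - {y}. Bpoly S (\<preceq>) x z * hom_uv (\<rho> z y) (Gpoly S (\<preceq>) z y)))"
  unfolding Bpoly_def
  by (rule fuel_unfold[where F = "\<lambda>n. Bf n S (\<preceq>)" and \<Phi> = "\<lambda>h x y. if \<rho> x y = 0 then 1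
      else subst_uv (Gpoly S (\<preceq>) x y) - (\<Sum>z\<in>I x y - {y}. h x z * hom_uv (\<rho> z y) (Gpoly S (\<preceq>) z y))"])
    (use assms card_itv_less_left in \<open>auto intro!: sum.cong\<close>)

lemma rank_refl:
  assumes "x \<in> S"
  shows "\<rho> x x = 0"
proof -
  have chain_x: "is_chain {x} (\<preceq>) {x}"
    using poset_refl[OF assms] by (simp add: is_chain_def)
  have "max_chain {x} (\<preceq>) C \<longleftrightarrow> C = {x}" for C
  proof
    assume C: "max_chain {x} (\<preceq>) C"
    then have "C \<subseteq> {x}"
      by (simp add: max_chain_def is_chain_def)
    with C chain_x show "C = {x}"
      unfolding max_chain_def by blast
  next
    assume "C = {x}"
    with chain_x show "max_chain {x} (\<preceq>) C"
      unfolding max_chain_def is_chain_def by auto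
  qed
  then have "{card C |C. max_chain (I x x) (\<preceq>) C} = {1}"
    by (simp add: itv_refl[OF assms])
  then show ?thesis
    by (simp add: rk_def prank_def)
qed

lemma Gpoly_refl: "x \<in> S \<Longrightarrow> Gpoly S (\<preceq>) x x = 1"
  and Bpoly_refl: "x \<in> S \<Longrightarrow> Bpoly S (\<preceq>) x x = 1"
  by (simp_all add: Gpoly_unfold Bpoly_unfold rank_refl poset_refl)

lemma max_chain_exists: "\<exists>C. max_chain (I x y) (\<preceq>) C"
proof -
  let ?A = "{C. is_chain (I x y) (\<preceq>) C}"
  have "finite ?A"
    by (rule finite_subset[of _ "Pow (I x y)"]) (auto simp: is_chain_def)
  moreover have "{} \<in> ?A"
    by (simp add: is_chain_def)
  ultimately obtain C where "C \<in> ?A" "\<forall>D\<in>?A. C \<subseteq> D \<longrightarrow> C = D"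
    using finite_has_maximal[of ?A] by blast
  then show ?thesis
    unfolding max_chain_def by blast
qed

lemma max_chain_subset: "max_chain (I x y) (\<preceq>) C \<Longrightarrow> C \<subseteq> I x y"
  by (simp add: max_chain_def is_chain_def)

lemma finite_max_chain: "max_chain (I x y) (\<preceq>) C \<Longrightarrow> finite C"
  by (rule finite_subset[OF max_chain_subset finite_itv])

lemma mem_max_chainI:
  assumes "max_chain (I x y) (\<preceq>) C" and "w \<in> I x y" and "\<forall>c\<in>C. c \<preceq> w \<or> w \<preceq> c"
  shows "w \<in> C"
proof -
  have "is_chain (I x y) (\<preceq>) (insert w C)"
    using assms poset_refl unfolding max_chain_def is_chain_def by auto
  then show ?thesis
    using assms(1) unfolding max_chain_def by blast
qed

lemma max_chain_endpoints:
  assumes "x \<in> S" and "y \<in> S" and "x \<preceq> y" and C: "max_chain (I x y) (\<preceq>) C"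
  shows "x \<in> C" and "y \<in> C"
proof -
  have "C \<subseteq> I x y"
    using C by (rule max_chain_subset)
  then show "x \<in> C" and "y \<in> C"
    using assms(1-3) by (auto intro!: mem_max_chainI[OF C] simp: poset_refl subset_iff)
qed

lemma max_chain_Un_absorb:
  assumes "x \<in> S" and "z \<in> S" and "x \<preceq> z"
    and C1: "max_chain (I x z) (\<preceq>) C1" and C2: "max_chain (I z y) (\<preceq>) C2"
    and w: "w \<in> I x y" and comparable: "\<forall>c\<in>C1 \<union> C2. c \<preceq> w \<or> w \<preceq> c"
  shows "w \<in> C1 \<union> C2"
proof -
  have "z \<in> C1"
    using max_chain_endpoints assms(1-3) C1 by blast
  then consider "w \<preceq> z" | "z \<preceq> w"
    using comparable by blast
  then show ?thesis
  proof cases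
    case 1
    with w comparable have "w \<in> C1"
      by (intro mem_max_chainI[OF C1]) auto
    then show ?thesis ..
  next
    case 2
    with w comparable have "w \<in> C2"
      by (intro mem_max_chainI[OF C2]) auto
    then show ?thesis ..
  qed
qed

lemma max_chain_Un:
  assumes "x \<in> S" and "z \<in> S" and "y \<in> S" and "x \<preceq> z" and "z \<preceq> y"
    and C1: "max_chain (I x z) (\<preceq>) C1" and C2: "max_chain (I z y) (\<preceq>) C2"
  shows "max_chain (I x y) (\<preceq>) (C1 \<union> C2)"
proof -
  have sub: "C1 \<subseteq> I x z" "C2 \<subseteq> I z y"
    and comp: "\<forall>a\<in>C1. \<forall>b\<in>C1. a \<preceq> b \<or> b \<preceq> a" "\<forall>a\<in>C2. \<forall>b\<in>C2. a \<preceq> b \<or> b \<preceq> a"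
    using C1 C2 by (auto simp: max_chain_def is_chain_def)
  have below: "a \<preceq> b" if "a \<in> C1" "b \<in> C2" for a b
  proof -
    have "a \<in> S" "a \<preceq> z" "b \<in> S" "z \<preceq> b"
      using that sub by auto
    then show ?thesis
      using assms(2) poset_trans by blast
  qed
  have "C1 \<union> C2 \<subseteq> I x y"
  proof
    fix a assume "a \<in> C1 \<union> C2"
    then show "a \<in> I x y"
      using sub assms(1-5) poset_trans[of a z y] poset_trans[of x z a] by auto
  qed
  then have chain: "is_chain (I x y) (\<preceq>) (C1 \<union> C2)"
    using comp below unfolding is_chain_def by blast
  have "w \<in> C1 \<union> C2" if "is_chain (I x y) (\<preceq>) D" "C1 \<union> C2 \<subseteq> D" "w \<in> D" for D w
    using that by (intro max_chain_Un_absorb[OF assms(1,2,4) C1 C2]) (auto simp: is_chain_def)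
  with chain show ?thesis
    unfolding max_chain_def by blast
qed

lemma max_chain_Int:
  assumes "x \<in> S" and "z \<in> S" and "y \<in> S" and "x \<preceq> z" and "z \<preceq> y"
    and C1: "max_chain (I x z) (\<preceq>) C1" and C2: "max_chain (I z y) (\<preceq>) C2"
  shows "C1 \<inter> C2 = {z}"
proof -
  have "C1 \<subseteq> I x z" "C2 \<subseteq> I z y"
    using C1 C2 by (simp_all add: max_chain_subset)
  then have "w = z" if "w \<in> C1" "w \<in> C2" for w
    using that assms(2) poset_antisym[of w z] by (auto simp: subset_iff)
  moreover have "z \<in> C1" "z \<in> C2"
    using max_chain_endpoints assms by blast+
  ultimately show ?thesis by blast
qed

lemma card_Un_max_chains:
  assumes "x \<in> S" and "z \<in> S" and "y \<in> S" and "x \<preceq> z" and "z \<preceq> y"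
    and "max_chain (I x z) (\<preceq>) C1" and "max_chain (I z y) (\<preceq>) C2"
  shows "card (C1 \<union> C2) + 1 = card C1 + card C2"
  using card_Un_Int[OF finite_max_chain finite_max_chain, OF assms(6,7)] max_chain_Int[OF assms]
  by simp

definition delta :: "'a \<Rightarrow> 'a \<Rightarrow> 'b::zero_neq_one" where
  "delta x y = of_bool (x = y)"

definition conv :: "('a \<Rightarrow> 'a \<Rightarrow> 'b::comm_semiring_1) \<Rightarrow> ('a \<Rightarrow> 'a \<Rightarrow> 'b) \<Rightarrow> 'a \<Rightarrow> 'a \<Rightarrow> 'b"
    (infixl "\<star>" 70) where
  "(f \<star> g) x y = (\<Sum>z\<in>I x y. f x z * g z y)"

definition incidence_eq :: "('a \<Rightarrow> 'a \<Rightarrow> 'b) \<Rightarrow> ('a \<Rightarrow> 'a \<Rightarrow> 'b) \<Rightarrow> bool" (infix "\<doteq>" 50) where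
  "f \<doteq> g \<longleftrightarrow> (\<forall>x\<in>S. \<forall>y\<in>S. x \<preceq> y \<longrightarrow> f x y = g x y)"

lemma incidence_eqI: "(\<And>x y. x \<in> S \<Longrightarrow> y \<in> S \<Longrightarrow> x \<preceq> y \<Longrightarrow> f x y = g x y) \<Longrightarrow> f \<doteq> g"
  and incidence_eqD: "f \<doteq> g \<Longrightarrow> x \<in> S \<Longrightarrow> y \<in> S \<Longrightarrow> x \<preceq> y \<Longrightarrow> f x y = g x y"
  by (simp_all add: incidence_eq_def)

lemma incidence_eq_refl [simp]: "f \<doteq> f"
  and incidence_eq_sym: "f \<doteq> g \<Longrightarrow> g \<doteq> f"
  and incidence_eq_trans [trans]: "f \<doteq> g \<Longrightarrow> g \<doteq> h \<Longrightarrow> f \<doteq> h"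
  by (simp_all add: incidence_eq_def)

lemma conv_cong: "f \<doteq> f' \<Longrightarrow> g \<doteq> g' \<Longrightarrow> f \<star> g \<doteq> f' \<star> g'"
  by (auto simp: incidence_eq_def conv_def intro!: sum.cong)

lemma conv_split_left:
  "x \<in> S \<Longrightarrow> x \<preceq> y \<Longrightarrow> (f \<star> g) x y = f x x * g x y + (\<Sum>z\<in>I x y - {x}. f x z * g z y)"
  unfolding conv_def by (rule sum.remove[OF finite_itv left_mem_itv])

lemma conv_split_right:
  "y \<in> S \<Longrightarrow> x \<preceq> y \<Longrightarrow> (f \<star> g) x y = f x y * g y y + (\<Sum>z\<in>I x y - {y}. f x z * g z y)"
  unfolding conv_def by (rule sum.remove[OF finite_itv right_mem_itv])

lemma sum_itv_swap:
  assumes "x \<in> S" and "y \<in> S"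
  shows "(\<Sum>z\<in>I x y. \<Sum>w\<in>I z y. F z w) = (\<Sum>w\<in>I x y. \<Sum>z\<in>I x w. F z w)"
proof -
  have "(\<Sum>z\<in>I x y. \<Sum>w\<in>I z y. F z w) = (\<Sum>z\<in>I x y. \<Sum>w\<in>{w \<in> I x y. z \<preceq> w}. F z w)"
  proof (rule sum.cong[OF refl])
    fix z assume "z \<in> I x y"
    then have "I z y = {w \<in> I x y. z \<preceq> w}"
      using assms(1) poset_trans[of x z] by auto
    then show "(\<Sum>w\<in>I z y. F z w) = (\<Sum>w\<in>{w \<in> I x y. z \<preceq> w}. F z w)"
      by (simp only:)
  qed
  also have "\<dots> = (\<Sum>w\<in>I x y. \<Sum>z\<in>{z \<in> I x y. z \<preceq> w}. F z w)"
    by (rule sum.swap_restrict) simp_all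
  also have "\<dots> = (\<Sum>w\<in>I x y. \<Sum>z\<in>I x w. F z w)"
  proof (rule sum.cong[OF refl])
    fix w assume "w \<in> I x y"
    then have "I x w = {z \<in> I x y. z \<preceq> w}"
      using assms(2) poset_trans[of _ w y] by auto
    then show "(\<Sum>z\<in>{z \<in> I x y. z \<preceq> w}. F z w) = (\<Sum>z\<in>I x w. F z w)"
      by (simp only:)
  qed
  finally show ?thesis .
qed

lemma conv_assoc: "(f \<star> g) \<star> h \<doteq> f \<star> (g \<star> h)"
proof (rule incidence_eqI)
  fix x y assume "x \<in> S" "y \<in> S"
  then show "((f \<star> g) \<star> h) x y = (f \<star> (g \<star> h)) x y"
    by (simp add: conv_def sum_distrib_left sum_distrib_right sum_itv_swap mult.assoc)
qed

lemma conv_delta_left: "delta \<star> f \<doteq> f"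
  by (rule incidence_eqI) (simp add: conv_def delta_def Int_insert_right poset_refl)

lemma conv_right_cancel:
  fixes f g h :: "'a \<Rightarrow> 'a \<Rightarrow> 'b::comm_ring_1"
  assumes h_diag: "\<And>y. y \<in> S \<Longrightarrow> h y y = 1" and eq: "f \<star> h \<doteq> g \<star> h"
  shows "f \<doteq> g"
proof (rule incidence_eqI)
  fix x y assume "x \<in> S" "y \<in> S" "x \<preceq> y"
  then show "f x y = g x y"
  proof (induction "card (I x y)" arbitrary: y rule: less_induct)
    case less
    have "f x z = g x z" if "z \<in> I x y - {y}" for z
      using that less.prems card_itv_less_left[OF less.prems(1,2) that] by (intro less.hyps) auto
    then have "(\<Sum>z\<in>I x y - {y}. f x z * h z y) = (\<Sum>z\<in>I x y - {y}. g x z * h z y)"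
      by simp
    with incidence_eqD[OF eq less.prems] show ?case
      by (simp add: conv_split_right less.prems h_diag)
  qed
qed

end

section \<open>Eulerian posets\<close>

locale eulerian_poset = finite_poset +
  fixes zero one :: 'a and d :: nat
  assumes zero_in: "zero \<in> S" and one_in: "one \<in> S"
    and zero_le: "x \<in> S \<Longrightarrow> zero \<preceq> x" and le_one: "x \<in> S \<Longrightarrow> x \<preceq> one"
    and card_max_chain: "max_chain S (\<preceq>) C \<Longrightarrow> card C = d + 1"
    and mobius_rank: "x \<in> S \<Longrightarrow> y \<in> S \<Longrightarrow> x \<preceq> y \<Longrightarrow>
      mobius S (\<preceq>) x y = (-1) ^ (\<rho> zero y - \<rho> zero x)"

lemma eulerian_poset_if_eulerian: "eulerian S le zero one d \<Longrightarrow> eulerian_poset S le zero one d"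
  unfolding eulerian_def eulerian_poset_def eulerian_poset_axioms_def finite_poset_def by blast

context eulerian_poset
begin

lemma itv_zero_one: "I zero one = S"
  using zero_le le_one by auto

lemma card_max_chain_extend:
  assumes "x \<in> S" and "y \<in> S" and "x \<preceq> y" and C: "max_chain (I x y) (\<preceq>) C"
    and A: "max_chain (I zero x) (\<preceq>) A" and D: "max_chain (I y one) (\<preceq>) D"
  shows "card A + card C + card D = d + 3"
proof -
  note x = zero_in assms(1) assms(2) zero_le[OF assms(1)] assms(3)
  note y = zero_in assms(2) one_in zero_le[OF assms(2)] le_one[OF assms(2)]
  have AC: "max_chain (I zero y) (\<preceq>) (A \<union> C)"
    by (rule max_chain_Un[OF x A C])
  have "max_chain (I zero one) (\<preceq>) (A \<union> C \<union> D)"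
    by (rule max_chain_Un[OF y AC D])
  then have "card (A \<union> C \<union> D) = d + 1"
    by (simp add: card_max_chain itv_zero_one)
  moreover have "card (A \<union> C \<union> D) + 1 = card (A \<union> C) + card D"
    by (rule card_Un_max_chains[OF y AC D])
  moreover have "card (A \<union> C) + 1 = card A + card C"
    by (rule card_Un_max_chains[OF x A C])
  ultimately show ?thesis by simp
qed

lemma card_max_chain_itv:
  assumes "x \<in> S" and "y \<in> S" and "x \<preceq> y" and C: "max_chain (I x y) (\<preceq>) C"
  shows "card C = \<rho> x y + 1"
proof -
  obtain A D where A: "max_chain (I zero x) (\<preceq>) A" and D: "max_chain (I y one) (\<preceq>) D"
    using max_chain_exists by blast
  have "card C' = card C" if "max_chain (I x y) (\<preceq>) C'" for C'
    using card_max_chain_extend[OF assms(1-3) that A D] card_max_chain_extend[OF assms A D] by simp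
  then have "{card C' |C'. max_chain (I x y) (\<preceq>) C'} = {card C}"
    using C by blast
  moreover have "card C \<noteq> 0"
    using max_chain_endpoints[OF assms] finite_max_chain[OF C] by auto
  ultimately show ?thesis
    by (simp add: rk_def prank_def)
qed

lemma rank_add:
  assumes "x \<in> S" and "z \<in> S" and "y \<in> S" and "x \<preceq> z" and "z \<preceq> y"
  shows "\<rho> x y = \<rho> x z + \<rho> z y"
proof -
  obtain C1 C2 where C1: "max_chain (I x z) (\<preceq>) C1" and C2: "max_chain (I z y) (\<preceq>) C2"
    using max_chain_exists by blast
  have "x \<preceq> y"
    using assms poset_trans by blast
  then show ?thesis
    using card_Un_max_chains[OF assms C1 C2] card_max_chain_itv[OF assms(1,3) _ max_chain_Un[OF assms C1 C2]]
      card_max_chain_itv[OF assms(1,2,4) C1] card_max_chain_itv[OF assms(2,3,5) C2]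
    by simp
qed

lemma rank_eq_0_iff:
  assumes "x \<in> S" and "y \<in> S" and "x \<preceq> y"
  shows "\<rho> x y = 0 \<longleftrightarrow> x = y"
proof
  assume "\<rho> x y = 0"
  obtain C where C: "max_chain (I x y) (\<preceq>) C"
    using max_chain_exists by blast
  then have "card C = 1"
    using card_max_chain_itv[OF assms] \<open>\<rho> x y = 0\<close> by simp
  with max_chain_endpoints[OF assms C] show "x = y"
    by (metis card_1_singletonE singletonD)
qed (use assms rank_refl in simp)

lemma rank_zero_one: "\<rho> zero one = d"
proof -
  obtain C where "max_chain (I zero one) (\<preceq>) C"
    using max_chain_exists by blast
  then show ?thesis
    using card_max_chain_itv[OF zero_in one_in le_one[OF zero_in]] card_max_chain
    by (simp add: itv_zero_one)
qed

lemma mobius_eq_sign: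
  assumes "x \<in> S" and "y \<in> S" and "x \<preceq> y"
  shows "mobius S (\<preceq>) x y = (-1) ^ \<rho> x y"
  using mobius_rank[OF assms] rank_add[OF zero_in assms(1,2) zero_le[OF assms(1)] assms(3)] by simp

lemma alternating_sum_itv:
  assumes "x \<in> S" and "y \<in> S" and "x \<preceq> y" and "x \<noteq> y"
  shows "(\<Sum>z\<in>I x y. (-1 :: 'b::comm_ring_1) ^ \<rho> x z) = 0"
proof -
  have "(\<Sum>z\<in>I x y. (-1 :: int) ^ \<rho> x z) = (\<Sum>z\<in>I x y. mobius S (\<preceq>) x z)"
    using assms(1) by (intro sum.cong) (simp_all add: mobius_eq_sign)
  also have "\<dots> = 0"
    using sum.remove[OF finite_itv right_mem_itv[OF assms(2,3)], of "mobius S (\<preceq>) x"]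
      mobius_unfold[OF assms] by simp
  finally have "(\<Sum>z\<in>I x y. (-1 :: int) ^ \<rho> x z) = 0" .
  then have "of_int (\<Sum>z\<in>I x y. (-1 :: int) ^ \<rho> x z) = (0 :: 'b)"
    by simp
  then show ?thesis
    by simp
qed

definition rank_pow :: "'b::comm_semiring_1 \<Rightarrow> 'a \<Rightarrow> 'a \<Rightarrow> 'b" where
  "rank_pow c x y = c ^ \<rho> x y"

definition rank_scale :: "'b::comm_semiring_1 \<Rightarrow> ('a \<Rightarrow> 'a \<Rightarrow> 'b) \<Rightarrow> 'a \<Rightarrow> 'a \<Rightarrow> 'b" where
  "rank_scale c f x y = c ^ \<rho> x y * f x y"

lemma rank_scale_rank_scale: "rank_scale a (rank_scale b f) = rank_scale (a * b) f"
  by (simp add: fun_eq_iff rank_scale_def power_mult_distrib mult.assoc)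

lemma rank_scale_rank_pow: "rank_scale a (rank_pow b) = rank_pow (a * b)"
  by (simp add: fun_eq_iff rank_scale_def rank_pow_def power_mult_distrib)

lemma rank_scale_cong: "f \<doteq> g \<Longrightarrow> rank_scale c f \<doteq> rank_scale c g"
  by (simp add: incidence_eq_def rank_scale_def)

lemma rank_scale_diag: "x \<in> S \<Longrightarrow> rank_scale c f x x = f x x"
  by (simp add: rank_scale_def rank_refl)

lemma conv_rank_scale: "rank_scale c f \<star> rank_scale c g \<doteq> rank_scale c (f \<star> g)"
proof (rule incidence_eqI)
  fix x y assume "x \<in> S" "y \<in> S" "x \<preceq> y"
  then have "c ^ \<rho> x z * f x z * (c ^ \<rho> z y * g z y) = c ^ \<rho> x y * (f x z * g z y)"
    if "z \<in> I x y" for z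
    using that rank_add[of x z y] by (simp add: power_add mult_ac)
  then show "(rank_scale c f \<star> rank_scale c g) x y = rank_scale c (f \<star> g) x y"
    unfolding conv_def rank_scale_def sum_distrib_left by (intro sum.cong) auto
qed

lemma rank_pow_uminus_conv:
  fixes c :: "'b::comm_ring_1"
  shows "rank_pow (- c) \<star> rank_pow c \<doteq> delta"
proof (rule incidence_eqI)
  fix x y assume xy: "x \<in> S" "y \<in> S" "x \<preceq> y"
  show "(rank_pow (- c) \<star> rank_pow c) x y = delta x y"
  proof (cases "x = y")
    case True
    then show ?thesis
      using xy by (simp add: conv_def rank_pow_def delta_def itv_refl rank_refl)
  next
    case False
    have "(-c) ^ \<rho> x z * c ^ \<rho> z y = c ^ \<rho> x y * (-1) ^ \<rho> x z" if "z \<in> I x y" for z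
      using that xy rank_add[of x z y] by (subst power_minus) (simp add: power_add mult_ac)
    then have "(rank_pow (- c) \<star> rank_pow c) x y = c ^ \<rho> x y * (\<Sum>z\<in>I x y. (-1) ^ \<rho> x z)"
      unfolding conv_def rank_pow_def sum_distrib_left by (intro sum.cong) auto
    with False xy show ?thesis
      by (simp add: alternating_sum_itv delta_def)
  qed
qed

lemma rank_pow_uminus_conv_cancel:
  fixes c :: "'b::comm_ring_1"
  shows "rank_pow (- c) \<star> (rank_pow c \<star> f) \<doteq> f"
proof -
  have "rank_pow (- c) \<star> (rank_pow c \<star> f) \<doteq> rank_pow (- c) \<star> rank_pow c \<star> f"
    by (rule incidence_eq_sym[OF conv_assoc])
  also have "\<dots> \<doteq> delta \<star> f"
    by (rule conv_cong[OF rank_pow_uminus_conv incidence_eq_refl])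
  also have "\<dots> \<doteq> f"
    by (rule conv_delta_left)
  finally show ?thesis .
qed

abbreviation Gval :: "real \<Rightarrow> 'a \<Rightarrow> 'a \<Rightarrow> real" where
  "Gval t x y \<equiv> ipoly (Gpoly S (\<preceq>) x y) t"

abbreviation Bval :: "real \<Rightarrow> real \<Rightarrow> 'a \<Rightarrow> 'a \<Rightarrow> real" where
  "Bval u v x y \<equiv> eval_uv (Bpoly S (\<preceq>) x y) u v"

lemma degree_Gpoly: "x \<in> S \<Longrightarrow> y \<in> S \<Longrightarrow> x \<preceq> y \<Longrightarrow> degree (Gpoly S (\<preceq>) x y) \<le> \<rho> x y"
  by (simp add: Gpoly_unfold degree_tau_half)

lemma one_minus_X_Hpoly:
  assumes "x \<in> S" and "y \<in> S" and "x \<preceq> y" and "x \<noteq> y"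
  shows "[:1, -1:] * Hpoly S (\<preceq>) x y = - (\<Sum>z\<in>I x y - {x}. [:-1, 1:] ^ \<rho> x z * Gpoly S (\<preceq>) z y)"
proof -
  have "\<rho> x y \<noteq> 0"
    using assms rank_eq_0_iff by simp
  then have "[:1, -1:] * Hpoly S (\<preceq>) x y
      = (\<Sum>z\<in>I x y - {x}. [:1, -1:] * ([:-1, 1:] ^ (\<rho> x z - 1) * Gpoly S (\<preceq>) z y))"
    by (simp add: Hpoly_def sum_distrib_left)
  also have "\<dots> = (\<Sum>z\<in>I x y - {x}. - ([:-1, 1:] ^ \<rho> x z * Gpoly S (\<preceq>) z y))"
  proof (rule sum.cong[OF refl])
    fix z assume "z \<in> I x y - {x}"
    then have "\<rho> x z \<noteq> 0"
      using assms(1) rank_eq_0_iff by auto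
    then have "[:-1, 1:] ^ \<rho> x z = [:-1, 1::int:] * [:-1, 1:] ^ (\<rho> x z - 1)"
      by (cases "\<rho> x z") simp_all
    moreover have "[:1, -1:] = - [:-1, 1::int:]"
      by simp
    ultimately show "[:1, -1:] * ([:-1, 1:] ^ (\<rho> x z - 1) * Gpoly S (\<preceq>) z y)
        = - ([:-1, 1:] ^ \<rho> x z * Gpoly S (\<preceq>) z y)"
      by (simp only: mult_minus_left mult.assoc)
  qed
  finally show ?thesis
    by (simp only: sum_negf)
qed

lemma degree_one_minus_X_Hpoly:
  assumes "x \<in> S" and "y \<in> S" and "x \<preceq> y" and "x \<noteq> y"
  shows "degree ([:1, -1:] * Hpoly S (\<preceq>) x y) \<le> \<rho> x y"
  unfolding one_minus_X_Hpoly[OF assms] degree_minus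
proof (rule degree_sum_le)
  fix z assume "z \<in> I x y - {x}"
  then have z: "z \<in> S" "x \<preceq> z" "z \<preceq> y" by auto
  have "degree ([:-1, 1:] ^ \<rho> x z * Gpoly S (\<preceq>) z y)
      \<le> degree ([:-1, 1::int:] ^ \<rho> x z) + degree (Gpoly S (\<preceq>) z y)"
    by (rule degree_mult_le)
  also have "\<dots> \<le> \<rho> x z + \<rho> z y"
    using degree_power_le[of "[:-1, 1::int:]" "\<rho> x z"] degree_Gpoly[OF z(1) assms(2) z(3)]
    by (intro add_mono) simp_all
  finally have "degree ([:-1, 1:] ^ \<rho> x z * Gpoly S (\<preceq>) z y) \<le> \<rho> x z + \<rho> z y" .
  then show "degree ([:-1, 1:] ^ \<rho> x z * Gpoly S (\<preceq>) z y) \<le> \<rho> x y"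
    using rank_add[OF assms(1) z(1) assms(2) z(2,3)] by simp
qed simp

lemma ipoly_one_minus_X_Hpoly:
  assumes "x \<in> S" and "y \<in> S" and "x \<preceq> y" and "x \<noteq> y"
  shows "ipoly ([:1, -1:] * Hpoly S (\<preceq>) x y) t = Gval t x y - (rank_pow (t - 1) \<star> Gval t) x y"
  unfolding one_minus_X_Hpoly[OF assms] using assms(1,3)
  by (simp add: conv_split_left rank_pow_def rank_refl)

text \<open>The Kazhdan--Lusztig--Stanley identity \<open>t^\<rho> G(1/t) = G(t) + (t - 1) H(t)\<close> for Eulerian
  posets: induction on the rank shows that \<open>(1 - t) H\<close> is antisymmetric of degree \<open>\<rho>\<close>, and
  truncating an antisymmetric polynomial at half its degree yields exactly this relation.\<close>

lemma mirror_one_minus_X_Hpoly: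
  assumes "x \<in> S" and "y \<in> S" and "x \<preceq> y" and "x \<noteq> y"
    and IH: "\<And>z t. z \<in> I x y - {x} \<Longrightarrow> t \<noteq> 0 \<Longrightarrow>
      (rank_pow (t - 1) \<star> Gval t) z y = rank_scale t (Gval (1 / t)) z y"
  shows "mirror_poly (\<rho> x y) ([:1, -1:] * Hpoly S (\<preceq>) x y) = - ([:1, -1:] * Hpoly S (\<preceq>) x y)"
proof (rule ipoly_eqI)
  fix t :: real assume t: "t \<noteq> 0"
  let ?K = "\<lambda>s. rank_pow (s - 1) \<star> Gval s"
  let ?F = "rank_scale t (Gval (1 / t))"
  let ?P = "rank_pow (- (t - 1)) :: 'a \<Rightarrow> 'a \<Rightarrow> real"
  let ?Q = "[:1, -1:] * Hpoly S (\<preceq>) x y"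
  have "rank_scale t (?K (1 / t)) \<doteq> rank_scale t (rank_pow (1 / t - 1)) \<star> ?F"
    by (rule incidence_eq_sym[OF conv_rank_scale])
  also have "\<dots> \<doteq> ?P \<star> ?F"
    using t by (simp add: rank_scale_rank_pow algebra_simps)
  finally have "rank_scale t (?K (1 / t)) x y = (?P \<star> ?F) x y"
    using assms(1-3) by (rule incidence_eqD)
  then have "t ^ \<rho> x y * ?K (1 / t) x y = (?P \<star> ?F) x y"
    by (simp only: rank_scale_def)
  also have "\<dots> = ?F x y + (\<Sum>z\<in>I x y - {x}. ?P x z * ?K t z y)"
    using assms(1,3) IH t by (simp add: conv_split_left rank_pow_def rank_refl)
  also have "\<dots> = ?F x y + (?P \<star> ?K t) x y - ?K t x y"
    using assms(1,3) by (simp add: conv_split_left rank_pow_def rank_refl)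
  also have "(?P \<star> ?K t) x y = Gval t x y"
    using rank_pow_uminus_conv_cancel assms(1-3) by (rule incidence_eqD)
  finally have "t ^ \<rho> x y * ?K (1 / t) x y = ?F x y + Gval t x y - ?K t x y" .
  moreover have "ipoly (mirror_poly (\<rho> x y) ?Q) t = t ^ \<rho> x y * ipoly ?Q (1 / t)"
    by (rule ipoly_mirror_poly[OF degree_one_minus_X_Hpoly[OF assms(1-4)] t])
  ultimately show "ipoly (mirror_poly (\<rho> x y) ?Q) t = ipoly (- ?Q) t"
    unfolding ipoly_uminus ipoly_one_minus_X_Hpoly[OF assms(1-4)] by (simp add: rank_scale_def right_diff_distrib)
qed

lemma Gpoly_reciprocity:
  assumes "t \<noteq> 0"
  shows "rank_pow (t - 1) \<star> Gval t \<doteq> rank_scale t (Gval (1 / t))"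
proof (rule incidence_eqI)
  fix x y assume "x \<in> S" "y \<in> S" "x \<preceq> y"
  then show "(rank_pow (t - 1) \<star> Gval t) x y = rank_scale t (Gval (1 / t)) x y"
    using assms
  proof (induction "\<rho> x y" arbitrary: x t rule: less_induct)
    case less
    show ?case
    proof (cases "x = y")
      case True
      with less.prems show ?thesis
        by (simp add: conv_def rank_pow_def rank_scale_def itv_refl rank_refl Gpoly_refl)
    next
      case False
      let ?Q = "[:1, -1:] * Hpoly S (\<preceq>) x y"
      note xy = less.prems(1-3) False
      have IH: "(rank_pow (s - 1) \<star> Gval s) z y = rank_scale s (Gval (1 / s)) z y"
        if "z \<in> I x y - {x}" and "s \<noteq> 0" for z s
      proof (rule less.hyps)
        show "\<rho> z y < \<rho> x y"
          using that less.prems rank_add[of x z y] rank_eq_0_iff[of x z] by auto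
      qed (use that less.prems in auto)
      have "Gpoly S (\<preceq>) x y = tau_half (\<rho> x y) ?Q"
        using xy by (simp add: Gpoly_unfold rank_eq_0_iff)
      moreover have "mirror_poly (\<rho> x y) (tau_half (\<rho> x y) ?Q) = tau_half (\<rho> x y) ?Q - ?Q"
        by (rule mirror_poly_tau_half[OF degree_one_minus_X_Hpoly[OF xy] mirror_one_minus_X_Hpoly[OF xy IH]])
      ultimately have "t ^ \<rho> x y * Gval (1 / t) x y = Gval t x y - ipoly ?Q t"
        using ipoly_mirror_poly[OF degree_tau_half less.prems(4), of "\<rho> x y" ?Q] by simp
      then show ?thesis
        unfolding ipoly_one_minus_X_Hpoly[OF xy] rank_scale_def by simp
    qed
  qed
qed

lemma Bpoly_recursion:
  assumes "u \<noteq> 0"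
  shows "Bval u v \<star> rank_scale u (Gval (v / u)) \<doteq> Gval (u * v)"
proof (rule incidence_eqI)
  fix x y assume xy: "x \<in> S" "y \<in> S" "x \<preceq> y"
  show "(Bval u v \<star> rank_scale u (Gval (v / u))) x y = Gval (u * v) x y"
  proof (cases "x = y")
    case True
    with xy show ?thesis
      by (simp add: conv_def rank_scale_def itv_refl rank_refl Gpoly_refl Bpoly_refl)
  next
    case False
    have "eval_uv (hom_uv (\<rho> z y) (Gpoly S (\<preceq>) z y)) u v = rank_scale u (Gval (v / u)) z y"
      if "z \<in> I x y - {y}" for z
      using that xy assms by (simp add: eval_uv_hom_uv degree_Gpoly rank_scale_def)
    then have "Bval u v x y
        = Gval (u * v) x y - (\<Sum>z\<in>I x y - {y}. Bval u v x z * rank_scale u (Gval (v / u)) z y)"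
      using xy False
      by (subst Bpoly_unfold[OF xy]) (simp add: rank_eq_0_iff eval_uv_subst_uv cong: sum.cong_simp)
    with xy show ?thesis
      by (simp add: conv_split_right rank_scale_diag Gpoly_refl)
  qed
qed

text \<open>Both sides, convolved with the unitriangular \<open>\<Gamma> = u^\<rho> G(v/u)\<close>, reduce to \<open>(uv)^\<rho> G(1/(uv))\<close>:
  the left one by reciprocity at \<open>v/u\<close> and the B-recursion at \<open>(1/u, 1/v)\<close>, the right one by the
  B-recursion at \<open>(u, v)\<close> and reciprocity at \<open>uv\<close>.\<close>

lemma Bpoly_duality:
  fixes u v :: real
  assumes "u \<noteq> 0" and "v \<noteq> 0"
  shows "rank_scale (u * v) (Bval (1 / u) (1 / v)) \<star> rank_pow (v - u)
    \<doteq> rank_pow (u * v - 1) \<star> Bval u v"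
proof (rule conv_right_cancel[where h = "rank_scale u (Gval (v / u))"])
  let ?\<Gamma> = "rank_scale u (Gval (v / u))"
  let ?B' = "rank_scale (u * v) (Bval (1 / u) (1 / v))"
  show "?\<Gamma> y y = 1" if "y \<in> S" for y
    using that by (simp add: rank_scale_diag Gpoly_refl)
  have "rank_pow (v - u) = rank_scale u (rank_pow (v / u - 1))"
    using assms by (simp add: rank_scale_rank_pow algebra_simps)
  then have "rank_pow (v - u) \<star> ?\<Gamma> \<doteq> rank_scale u (rank_pow (v / u - 1) \<star> Gval (v / u))"
    by (simp add: conv_rank_scale)
  also have "\<dots> \<doteq> rank_scale u (rank_scale (v / u) (Gval (u / v)))"
    using Gpoly_reciprocity[of "v / u"] assms by (simp add: rank_scale_cong)
  also have "\<dots> \<doteq> rank_scale (u * v) (rank_scale (1 / u) (Gval ((1 / v) / (1 / u))))"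
    using assms by (simp add: rank_scale_rank_scale)
  finally have \<Gamma>: "rank_pow (v - u) \<star> ?\<Gamma> \<doteq> rank_scale (u * v) (rank_scale (1 / u) (Gval ((1 / v) / (1 / u))))" .
  have "?B' \<star> rank_pow (v - u) \<star> ?\<Gamma> \<doteq> ?B' \<star> (rank_pow (v - u) \<star> ?\<Gamma>)"
    by (rule conv_assoc)
  also have "\<dots> \<doteq> ?B' \<star> rank_scale (u * v) (rank_scale (1 / u) (Gval ((1 / v) / (1 / u))))"
    by (rule conv_cong[OF incidence_eq_refl \<Gamma>])
  also have "\<dots> \<doteq> rank_scale (u * v) (Bval (1 / u) (1 / v) \<star> rank_scale (1 / u) (Gval ((1 / v) / (1 / u))))"
    by (rule conv_rank_scale)
  also have "\<dots> \<doteq> rank_scale (u * v) (Gval (1 / (u * v)))"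
    using Bpoly_recursion[of "1 / u" "1 / v"] assms by (simp add: rank_scale_cong)
  also have "\<dots> \<doteq> rank_pow (u * v - 1) \<star> Gval (u * v)"
    using Gpoly_reciprocity[of "u * v"] assms by (simp add: incidence_eq_sym)
  also have "\<dots> \<doteq> rank_pow (u * v - 1) \<star> (Bval u v \<star> ?\<Gamma>)"
    by (rule conv_cong[OF incidence_eq_refl incidence_eq_sym[OF Bpoly_recursion[OF assms(1)]]])
  also have "\<dots> \<doteq> rank_pow (u * v - 1) \<star> Bval u v \<star> ?\<Gamma>"
    by (rule incidence_eq_sym[OF conv_assoc])
  finally show "?B' \<star> rank_pow (v - u) \<star> ?\<Gamma> \<doteq> rank_pow (u * v - 1) \<star> Bval u v \<star> ?\<Gamma>" .
qed

end

theorem proposition2p11: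
  fixes S :: "'a set" and le :: "'a \<Rightarrow> 'a \<Rightarrow> bool" and zero one :: 'a and d :: nat
    and u v :: real
  assumes "eulerian S le zero one d"
    and "u \<noteq> 0" and "v \<noteq> 0"
  shows "(\<Sum>x\<in>S. eval_uv (Bpoly S le zero x) (1 / u) (1 / v) * (u * v) ^ (rk S le zero x)
                   * (v - u) ^ (d - rk S le zero x))
       = (\<Sum>x\<in>S. eval_uv (Bpoly S le x one) u v * (u * v - 1) ^ (rk S le zero x))"
proof -
  interpret eulerian_poset S le zero one d
    using assms(1) by (rule eulerian_poset_if_eulerian)
  have "(rank_scale (u * v) (Bval (1 / u) (1 / v)) \<star> rank_pow (v - u)) zero one
      = (rank_pow (u * v - 1) \<star> Bval u v) zero one"
    using Bpoly_duality[OF assms(2,3)] zero_in one_in le_one[OF zero_in] by (rule incidence_eqD)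
  moreover have "rk S le x one = d - rk S le zero x" if "x \<in> S" for x
    using rank_add[OF zero_in that one_in zero_le[OF that] le_one[OF that]] rank_zero_one by simp
  ultimately show ?thesis
    by (simp add: conv_def rank_scale_def rank_pow_def itv_zero_one mult_ac)
qed

end
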